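(* Let $p$ be an odd prime, $m\ge1$, $1\le s\le m-4$ with $m+s$ even, and $f\in\mathit{WRPB}$ an $s$-plateaued function $\mathbb{F}_{p^m}\to\mathbb{F}_p$ with sign $\epsilon$. Let $D_0=\{x\in\mathbb{F}_{p^m}^\star: f(x)=0\}$ and $\epsilon_0=\epsilon\,\eta_0^{(m+s)/2}(-1)$. Then $\mathcal{C}_{D_0}$ is a minimal code over $\mathbb{F}_p$ with parameters $[p^{m-1}-1,m,(p-1)(p^{m-2}-(p-1)\sqrt p^{\,m+s-4})]$ if $\epsilon_0=1$, and $[p^{m-1}-1,m,(p-1)(p^{m-2}-\sqrt p^{\,m+s-4})]$ otherwise.
   Context: $p$ is an odd prime, $\mathrm{Tr}^m$ is the trace from $\mathbb{F}_{p^m}$ to $\mathbb{F}_p$, $\zeta_p=e^{2\pi i/p}$, $\eta_0$ the quadratic character of $\mathbb{F}_p^\star$, $\eta_0^k(-1)=(\eta_0(-1))^k$, $p^*=\eta_0(-1)p$, $\sqrt{p^*}$ is $\sqrt p$ if $p\equiv1\pmod4$ and $i\sqrt p$ if $p\equiv3\pmod4$, $\sqrt p^{\,k}=(\sqrt p)^k$. For $f:\mathbb{F}_{p^m}\to\mathbb{F}_p$, $W_f(\omega)=\sum_x\zeta_p^{f(x)-\mathrm{Tr}^m(\omega x)}$; balanced means $W_f(0)=0$; $s$-plateaued means $|W_f(\omega)|^2\in\{0,p^{m+s}\}$ for all $\omega$, with $S_f=\{\omega:|W_f(\omega)|^2=p^{m+s}\}$; weakly regular means there are $u\in\{\pm1,\pm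 i\}$ independent of $\omega$ and $f^\star$ vanishing off $S_f$ with $W_f(\omega)\in\{0,u p^{(m+s)/2}\zeta_p^{f^\star(\omega)}\}$ for all $\omega$, and then there is a sign $\epsilon\in\{\pm1\}$ (the sign of $f$) with $W_f(\omega)=\epsilon\sqrt{p^*}^{\,m+s}\zeta_p^{f^\star(\omega)}$ on $S_f$. $\mathit{WRPB}$: weakly regular $s$-plateaued balanced $f$ with $f(0)=0$ and $f(ax)=a^tf(x)$ for all $a\in\mathbb{F}_p^\star$, $x$, for some positive even $t$ with $\gcd(t-1,p-1)=1$. For $D=\{d_1,\dots,d_n\}$, $\mathcal{C}_D=\{(\mathrm{Tr}^m(\omega d_1),\dots,\mathrm{Tr}^m(\omega d_n)):\omega\in\mathbb{F}_{p^m}\}$. $[n,k,d]$: length, dimension, minimum Hamming distance. A codeword $u$ covers $v$ if $\mathrm{supp}(v)\subseteq\mathrm{supp}(u)$; a linear code is minimal if each nonzero codeword $u$ covers only the codewords $iu$, $i\in\mathbb{F}_p$. *)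

theory Defs
  imports "HOL-Analysis.Analysis"
begin

text \<open>The field F_{p^m} is a finite field type 'a with CHAR('a) = p and
CARD('a) = p^m.  Elements of the prime field F_p are represented by natural numbers
0..p-1 (arithmetic mod p).  Functions f : F_{p^m} -> F_p are maps 'a => nat with values < p.\<close>

definition trace_elem :: "nat \<Rightarrow> nat \<Rightarrow> 'a::field \<Rightarrow> 'a" where
  "trace_elem p m x = (\<Sum>i<m. x ^ (p ^ i))"

definition Tr :: "nat \<Rightarrow> nat \<Rightarrow> 'a::field \<Rightarrow> nat" where
  "Tr p m x = (THE k. k < p \<and> of_nat k = trace_elem p m x)"

definition zeta :: "nat \<Rightarrow> complex" where
  "zeta p = cis (2 * pi / real p)"

definition walsh :: "nat \<Rightarrow> nat \<Rightarrow> ('a::{field,finite} \<Rightarrow> nat) \<Rightarrow> 'a \<Rightarrow> complex" where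
  "walsh p m f \<omega> = (\<Sum>x\<in>UNIV. zeta p powi (int (f x) - int (Tr p m (\<omega> * x))))"

definition balanced :: "nat \<Rightarrow> nat \<Rightarrow> ('a::{field,finite} \<Rightarrow> nat) \<Rightarrow> bool" where
  "balanced p m f \<longleftrightarrow> walsh p m f 0 = 0"

definition plateaued :: "nat \<Rightarrow> nat \<Rightarrow> nat \<Rightarrow> ('a::{field,finite} \<Rightarrow> nat) \<Rightarrow> bool" where
  "plateaued p m s f \<longleftrightarrow>
     (\<forall>\<omega>. (cmod (walsh p m f \<omega>))\<^sup>2 \<in> {0, real p ^ (m + s)})"

definition support_walsh :: "nat \<Rightarrow> nat \<Rightarrow> nat \<Rightarrow> ('a::{field,finite} \<Rightarrow> nat) \<Rightarrow> 'a set" where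
  "support_walsh p m s f = {\<omega>. (cmod (walsh p m f \<omega>))\<^sup>2 = real p ^ (m + s)}"

definition weakly_regular :: "nat \<Rightarrow> nat \<Rightarrow> nat \<Rightarrow> ('a::{field,finite} \<Rightarrow> nat) \<Rightarrow> bool" where
  "weakly_regular p m s f \<longleftrightarrow>
     (\<exists>u::complex. \<exists>fstar::'a \<Rightarrow> nat.
        u \<in> {1, -1, \<i>, -\<i>} \<and>
        (\<forall>\<omega>. fstar \<omega> < p) \<and>
        (\<forall>\<omega>. \<omega> \<notin> support_walsh p m s f \<longrightarrow> fstar \<omega> = 0) \<and>
        (\<forall>\<omega>. walsh p m f \<omega> \<in>
              {0, u * complex_of_real (sqrt (real p) ^ (m + s)) * zeta p ^ fstar \<omega>}))"

definition eta0_minus1 :: "nat \<Rightarrow> int" where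
  "eta0_minus1 p = (if p mod 4 = 1 then 1 else -1)"

definition sqrt_pstar :: "nat \<Rightarrow> complex" where
  "sqrt_pstar p = (if p mod 4 = 1 then complex_of_real (sqrt (real p))
                   else \<i> * complex_of_real (sqrt (real p)))"

definition has_sign :: "nat \<Rightarrow> nat \<Rightarrow> nat \<Rightarrow> ('a::{field,finite} \<Rightarrow> nat) \<Rightarrow> int \<Rightarrow> bool" where
  "has_sign p m s f \<epsilon> \<longleftrightarrow> \<epsilon> \<in> {1, -1} \<and>
     (\<exists>fstar::'a \<Rightarrow> nat. (\<forall>\<omega>. fstar \<omega> < p) \<and>
        (\<forall>\<omega>. \<omega> \<notin> support_walsh p m s f \<longrightarrow> fstar \<omega> = 0) \<and>
        (\<forall>\<omega>\<in>support_walsh p m s f.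
           walsh p m f \<omega> = of_int \<epsilon> * sqrt_pstar p ^ (m + s) * zeta p ^ fstar \<omega>))"

definition WRPB :: "nat \<Rightarrow> nat \<Rightarrow> nat \<Rightarrow> ('a::{field,finite} \<Rightarrow> nat) \<Rightarrow> bool" where
  "WRPB p m s f \<longleftrightarrow>
     (\<forall>x. f x < p) \<and>
     weakly_regular p m s f \<and> plateaued p m s f \<and> balanced p m f \<and> f 0 = 0 \<and>
     (\<exists>t::nat. t > 0 \<and> even t \<and> gcd (t - 1) (p - 1) = 1 \<and>
        (\<forall>a\<in>{1..<p}. \<forall>x. f (of_nat a * x) = (a ^ t * f x) mod p))"

text \<open>Codes: a codeword of length n = card D is a function D -> F_p (restricted to D).\<close>
definition code_D :: "nat \<Rightarrow> nat \<Rightarrow> 'a::field set \<Rightarrow> ('a \<Rightarrow> nat) set" where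
  "code_D p m D = (\<lambda>\<omega>. restrict (\<lambda>d. Tr p m (\<omega> * d)) D) ` UNIV"

definition cw_supp :: "'a set \<Rightarrow> ('a \<Rightarrow> nat) \<Rightarrow> 'a set" where
  "cw_supp D u = {d\<in>D. u d \<noteq> 0}"

definition hamming_dist :: "'a set \<Rightarrow> ('a \<Rightarrow> nat) \<Rightarrow> ('a \<Rightarrow> nat) \<Rightarrow> nat" where
  "hamming_dist D u v = card {d\<in>D. u d \<noteq> v d}"

definition min_distance :: "'a set \<Rightarrow> ('a \<Rightarrow> nat) set \<Rightarrow> nat" where
  "min_distance D C = Min {hamming_dist D u v | u v. u \<in> C \<and> v \<in> C \<and> u \<noteq> v}"

definition code_params :: "nat \<Rightarrow> 'a set \<Rightarrow> ('a \<Rightarrow> nat) set \<Rightarrow> nat \<Rightarrow> nat \<Rightarrow> nat \<Rightarrow> bool" where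
  "code_params p D C n k d \<longleftrightarrow> card D = n \<and> card C = p ^ k \<and> min_distance D C = d"

definition minimal_code :: "nat \<Rightarrow> 'a set \<Rightarrow> ('a \<Rightarrow> nat) set \<Rightarrow> bool" where
  "minimal_code p D C \<longleftrightarrow>
     (\<forall>u\<in>C. u \<noteq> restrict (\<lambda>_. 0) D \<longrightarrow>
        (\<forall>v\<in>C. cw_supp D v \<subseteq> cw_supp D u \<longrightarrow>
           (\<exists>i<p. v = restrict (\<lambda>d. (i * u d) mod p) D)))"

end

theory Submission
  imports Defs "HOL-Computational_Algebra.Computational_Algebra" "HOL-Library.Real_Mod"
begin

text \<open>For \<open>\<omega> \<noteq> 0\<close> the weight of the codeword of \<open>\<omega>\<close> is \<open>|D\<^sub>0|\<close> minus the number of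
  \<open>x \<noteq> 0\<close> with \<open>f(x) = 0 = Tr(\<omega>x)\<close>. Homogeneity of \<open>f\<close> makes \<open>|{x. f(x) = Tr(c\<omega>x)}|\<close>
  independent of \<open>c \<in> \<int>\<^sub>p\<^sup>*\<close>, so summing over \<open>c\<close> expresses that number through
  \<open>|{x. f(x) = Tr(\<omega>x)}|\<close>, which is read off from \<open>W\<^sub>f(\<omega>) = \<epsilon>\<^sub>0 p\<^bsup>(m+s)/2\<^esup> \<zeta>\<^sub>p\<^bsup>f*(\<omega>)\<^esup>\<close>
  because \<open>1, \<zeta>\<^sub>p, \<dots>, \<zeta>\<^sub>p\<^bsup>p-2\<^esup>\<close> are linearly independent (Eisenstein). Every weight is thus
  \<open>(p - 1)(p\<^bsup>m-2\<^esup> - \<epsilon>\<^sub>0 \<delta>(\<omega>) p\<^bsup>(m+s)/2-2\<^esup>)\<close> with \<open>\<delta>(\<omega>) \<in> {p - 1, -1, 0}\<close>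
  (\<open>deviation\<close> below). The extreme value of \<open>\<epsilon>\<^sub>0 \<delta>\<close> occurs since the Walsh values sum to
  \<open>p\<^sup>m\<close>, and for \<open>s + 4 \<le> m\<close> the minimal and maximal weights satisfy the Ashikhmin--Barg
  condition \<open>w\<^sub>m\<^sub>i\<^sub>n / w\<^sub>m\<^sub>a\<^sub>x > (p - 1) / p\<close>.\<close>

section \<open>Eisenstein's criterion and the cyclotomic polynomial \<open>\<Phi>\<^sub>p\<close>\<close>

lemma eisenstein_factor_degree_0:
  fixes G H :: "int poly" and q :: int
  assumes q: "prime q"
    and low: "\<And>i. i < degree (G * H) \<Longrightarrow> q dvd coeff (G * H) i"
    and lead: "\<not> q dvd lead_coeff (G * H)"
    and G0: "q dvd coeff G 0" and H0: "\<not> q dvd coeff H 0"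
  shows "degree H = 0"
proof (rule ccontr)
  assume "degree H \<noteq> 0"
  have "H \<noteq> 0" using H0 by auto
  moreover have "G \<noteq> 0" using lead by auto
  ultimately have deg: "degree (G * H) = degree G + degree H" by (simp add: degree_mult_eq)
  have "\<forall>i\<le>j. q dvd coeff G i" if "j \<le> degree G" for j
    using that
  proof (induction j)
    case 0
    then show ?case using G0 by simp
  next
    case (Suc j)
    then have IH: "\<forall>i\<le>j. q dvd coeff G i" by simp
    have "coeff (G * H) (Suc j) = (\<Sum>i\<le>j. coeff G i * coeff H (Suc j - i)) + coeff G (Suc j) * coeff H 0"
      by (simp add: coeff_mult)
    moreover have "q dvd coeff (G * H) (Suc j)"
      using low Suc.prems deg \<open>degree H \<noteq> 0\<close> by simp
    moreover have "q dvd (\<Sum>i\<le>j. coeff G i * coeff H (Suc j - i))"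
      using IH by (intro dvd_sum) auto
    ultimately have "q dvd coeff G (Suc j) * coeff H 0"
      by (metis dvd_add_right_iff)
    then have "q dvd coeff G (Suc j)" using H0 q prime_dvd_mult_iff by blast
    then show ?case using IH le_Suc_eq by auto
  qed
  then have "q dvd lead_coeff G" by blast
  then show False using lead by (simp add: lead_coeff_mult)
qed

lemma eisenstein_criterion:
  fixes G H :: "int poly" and q :: int
  assumes q: "prime q"
    and low: "\<And>i. i < degree (G * H) \<Longrightarrow> q dvd coeff (G * H) i"
    and const: "\<not> q\<^sup>2 dvd coeff (G * H) 0"
    and lead: "\<not> q dvd lead_coeff (G * H)"
  shows "degree G = 0 \<or> degree H = 0"
proof (cases "degree (G * H) = 0")
  case True
  moreover have "G \<noteq> 0" "H \<noteq> 0" using lead by auto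
  ultimately show ?thesis by (simp add: degree_mult_eq)
next
  case False
  have c0: "coeff (G * H) 0 = coeff G 0 * coeff H 0" by (simp add: coeff_mult)
  then have "q dvd coeff G 0 * coeff H 0" using low False by (metis neq0_conv)
  then have "q dvd coeff G 0 \<or> q dvd coeff H 0" using q prime_dvd_mult_iff by blast
  moreover have "\<not> (q dvd coeff G 0 \<and> q dvd coeff H 0)"
    using const c0 by (auto simp: power2_eq_square mult_dvd_mono)
  ultimately consider "q dvd coeff G 0" "\<not> q dvd coeff H 0" | "q dvd coeff H 0" "\<not> q dvd coeff G 0"
    by blast
  then show ?thesis
  proof cases
    case 1
    have "degree H = 0" by (rule eisenstein_factor_degree_0[of q G H]) (use q low lead 1 in auto)
    then show ?thesis ..
  next
    case 2
    then show ?thesis using eisenstein_factor_degree_0[of q H G] q low lead by (simp add: mult.commute)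
  qed
qed

definition prime_cyclotomic :: "nat \<Rightarrow> int poly" where
  "prime_cyclotomic p = (\<Sum>k<p. monom 1 k)"

lemma coeff_prime_cyclotomic: "coeff (prime_cyclotomic p) i = (if i < p then 1 else 0)"
  by (simp add: prime_cyclotomic_def coeff_sum)

lemma degree_prime_cyclotomic: "p > 0 \<Longrightarrow> degree (prime_cyclotomic p) = p - 1"
  by (intro antisym degree_le le_degree) (auto simp: coeff_prime_cyclotomic)

lemma content_prime_cyclotomic: "p > 0 \<Longrightarrow> content (prime_cyclotomic p) = 1"
proof -
  assume "p > 0"
  then have "content (prime_cyclotomic p) dvd 1"
    using content_dvd_coeff[of "prime_cyclotomic p" 0] by (simp add: coeff_prime_cyclotomic)
  then show ?thesis using is_unit_content_iff by blast
qed

text \<open>Shifting by one turns \<open>\<Phi>\<^sub>p\<close> into \<open>((x + 1)\<^sup>p - 1) / x\<close>, whose coefficients are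
  binomial coefficients.\<close>
lemma coeff_prime_cyclotomic_shift:
  "coeff (pcompose (prime_cyclotomic p) [:1, 1:]) i = int (p choose Suc i)"
proof -
  let ?E = "pcompose (prime_cyclotomic p) [:1, 1:]"
  have "?E * [:0, 1:] = [:1, 1:] ^ p - 1"
  proof (rule poly_ext)
    fix x :: int
    have "x * (\<Sum>k<n. (1 + x) ^ k) = (1 + x) ^ n - 1" for n
      by (induction n) (simp_all add: algebra_simps)
    then show "poly (?E * [:0, 1:]) x = poly ([:1, 1:] ^ p - 1) x"
      by (simp add: poly_pcompose prime_cyclotomic_def poly_sum poly_monom poly_power
          sum_distrib_right algebra_simps)
  qed
  moreover have "coeff ?E i = coeff (?E * [:0, 1:]) (Suc i)" by simp
  ultimately have "coeff ?E i = coeff ([:1, 1:] ^ p - 1) (Suc i)" by simp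
  also have "\<dots> = int (p choose Suc i)"
    using degree_power_le[of "[:1, 1 :: int:]" p]
    by (cases "Suc i \<le> p") (auto simp: coeff_linear_poly_power coeff_eq_0)
  finally show ?thesis .
qed

lemma prime_cyclotomic_irreducible:
  assumes p: "prime p" and GH: "prime_cyclotomic p = G * H"
  shows "degree G = 0 \<or> degree H = 0"
proof -
  let ?E = "pcompose (prime_cyclotomic p) [:1, 1:]"
  have p1: "p > 1" using p prime_gt_1_nat by blast
  have E: "?E = pcompose G [:1, 1:] * pcompose H [:1, 1:]"
    using GH by (simp add: pcompose_mult)
  have dE: "degree ?E = p - 1"
    using p1 by (intro antisym degree_le le_degree) (auto simp: coeff_prime_cyclotomic_shift)
  have "degree (pcompose G [:1, 1:]) = 0 \<or> degree (pcompose H [:1, 1:]) = 0"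
  proof (rule eisenstein_criterion)
    show "prime (int p)" using p by simp
    show "int p dvd coeff (pcompose G [:1, 1:] * pcompose H [:1, 1:]) i"
      if "i < degree (pcompose G [:1, 1:] * pcompose H [:1, 1:])" for i
      using that p1 p dvd_choose_prime[of "Suc i" p]
      by (simp flip: E add: dE coeff_prime_cyclotomic_shift)
    have "\<not> int p * int p dvd int p" using p1 by simp
    moreover have "coeff ?E 0 = int p" using coeff_prime_cyclotomic_shift[of p 0] by simp
    ultimately show "\<not> (int p)\<^sup>2 dvd coeff (pcompose G [:1, 1:] * pcompose H [:1, 1:]) 0"
      by (simp flip: E add: power2_eq_square)
    show "\<not> int p dvd lead_coeff (pcompose G [:1, 1:] * pcompose H [:1, 1:])"
      using p1 by (simp flip: E add: dE coeff_prime_cyclotomic_shift)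
  qed
  then show ?thesis by (simp add: degree_pcompose)
qed

section \<open>Linear independence of the powers of \<open>\<zeta>\<^sub>p\<close>\<close>

abbreviation poly_int :: "int poly \<Rightarrow> complex \<Rightarrow> complex" where
  "poly_int A \<equiv> poly (map_poly of_int A)"

lemma map_poly_of_int_add: "map_poly of_int (A + B) = map_poly of_int A + map_poly of_int B"
  by (intro poly_eqI) (simp add: coeff_map_poly)

lemma poly_int_add: "poly_int (A + B) z = poly_int A z + poly_int B z"
  by (simp add: map_poly_of_int_add)

lemma poly_int_smult: "poly_int (smult c A) z = of_int c * poly_int A z"
  by (simp add: map_poly_smult)

lemma poly_int_mult: "poly_int (A * B) z = poly_int A z * poly_int B z"
  by (induction A) (simp_all add: map_poly_of_int_add map_poly_smult map_poly_pCons algebra_simps)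

lemma poly_int_sum: "poly_int (\<Sum>k\<in>S. F k) z = (\<Sum>k\<in>S. poly_int (F k) z)"
  by (induction S rule: infinite_finite_induct) (auto simp: poly_int_add)

lemma poly_int_monom: "poly_int (monom c k) z = of_int c * z ^ k"
  by (simp add: map_poly_monom poly_monom)

lemma zeta_power_self: "p > 0 \<Longrightarrow> zeta p ^ p = 1"
  using Complex.DeMoivre[of "2 * pi / real p" p] by (simp add: zeta_def)

lemma zeta_neq_0: "zeta p \<noteq> 0"
  by (simp add: zeta_def)

lemma zeta_neq_1:
  assumes "p > 1"
  shows "zeta p \<noteq> 1"
proof
  assume "zeta p = 1"
  then obtain n :: int where "2 * pi / real p = of_int n * (2 * pi)"
    unfolding zeta_def cis_eq_1_iff by blast
  then have "real_of_int (n * int p) = 1" using assms by (simp add: field_simps)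
  then have "int p dvd 1" by (metis dvd_triv_right of_int_eq_1_iff)
  then show False using assms by simp
qed

lemma zeta_power_mod:
  assumes "p > 0"
  shows "zeta p ^ (n mod p) = zeta p ^ n"
proof -
  have "zeta p ^ n = zeta p ^ (p * (n div p) + n mod p)" by simp
  also have "\<dots> = (zeta p ^ p) ^ (n div p) * zeta p ^ (n mod p)"
    by (simp only: power_add power_mult)
  finally have "zeta p ^ n = (zeta p ^ p) ^ (n div p) * zeta p ^ (n mod p)" .
  then show ?thesis using zeta_power_self[OF assms] by simp
qed

lemma zeta_powi_diff:
  assumes "a < p" "b < p"
  shows "zeta p powi (int a - int b) = zeta p ^ ((a + p - b) mod p)"
proof -
  have "zeta p powi (int a - int b) = zeta p powi (int (a + p - b) - int p)"
    using assms by (simp add: of_nat_diff)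
  also have "\<dots> = zeta p ^ (a + p - b) / zeta p ^ p"
    using zeta_neq_0[of p] by (simp add: power_int_diff power_int_of_nat)
  finally show ?thesis using assms by (simp add: zeta_power_self zeta_power_mod)
qed

lemma add_diff_mod_eq_0_iff:
  fixes a b p :: nat
  assumes "a < p" "b < p"
  shows "(a + p - b) mod p = 0 \<longleftrightarrow> a = b"
proof (cases "b \<le> a")
  case True
  then have "(a + p - b) mod p = (a - b + p) mod p" by (simp add: add.commute)
  also have "\<dots> = a - b" using assms by simp
  finally show ?thesis using True by simp
next
  case False
  then show ?thesis using assms by simp
qed

lemma zeta_sum_powers: "p > 1 \<Longrightarrow> (\<Sum>k<p. zeta p ^ k) = 0"
  using geometric_sum[OF zeta_neq_1, of p p] zeta_power_self[of p] by simp

lemma poly_int_prime_cyclotomic_zeta: "p > 1 \<Longrightarrow> poly_int (prime_cyclotomic p) (zeta p) = 0"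
  by (simp add: prime_cyclotomic_def poly_int_sum poly_int_monom zeta_sum_powers)

lemma primitive_factor_of_smult:
  fixes F P q :: "int poly"
  assumes "content F = 1" "content P = 1" "c \<noteq> 0" "smult c F = P * q"
  shows "F = P * smult (unit_factor c) (primitive_part q)"
proof -
  have "unit_factor c * unit_factor c = 1" using assms(3) by (simp add: unit_factor_int_def sgn_if)
  moreover have "smult (unit_factor c) F = P * primitive_part q"
    using arg_cong[OF assms(4), of primitive_part] assms(1,2)
    by (simp add: primitive_part_smult primitive_part_mult primitive_part_prim)
  ultimately show ?thesis by (metis mult_smult_right smult_smult smult_1_left)
qed

text \<open>\<open>\<Phi>\<^sub>p\<close> is the minimal polynomial of \<open>\<zeta>\<^sub>p\<close>: a nonzero integer polynomial \<open>P\<close> of least degree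
  vanishing at \<open>\<zeta>\<^sub>p\<close> divides \<open>c \<Phi>\<^sub>p\<close> exactly (the pseudo-remainder vanishes at \<open>\<zeta>\<^sub>p\<close>), so
  by Gauss's lemma its primitive part is a nontrivial factor of \<open>\<Phi>\<^sub>p\<close>.\<close>
lemma degree_poly_int_zeta_root:
  assumes p: "prime p" and A: "A \<noteq> 0" "poly_int A (zeta p) = 0"
  shows "degree A \<ge> p - 1"
proof (rule ccontr)
  assume "\<not> degree A \<ge> p - 1"
  have p1: "p > 1" using p prime_gt_1_nat by blast
  let ?Z = "\<lambda>C. C \<noteq> 0 \<and> poly_int C (zeta p) = 0"
  obtain B where B: "?Z B" and B_min: "\<And>C. ?Z C \<Longrightarrow> degree B \<le> degree C"
    using ex_has_least_nat[of ?Z A degree] A by blast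
  have "degree B < p - 1" using B_min[of A] A \<open>\<not> degree A \<ge> p - 1\<close> by simp
  define P where "P = primitive_part B"
  have P: "P \<noteq> 0" "degree P = degree B" "content P = 1"
    using B by (simp_all add: P_def)
  have "poly_int B (zeta p) = of_int (content B) * poly_int P (zeta p)"
    by (metis P_def content_times_primitive_part poly_int_smult)
  then have P_root: "poly_int P (zeta p) = 0" using B by simp
  obtain q r where qr: "pseudo_divmod (prime_cyclotomic p) P = (q, r)"
    by (cases "pseudo_divmod (prime_cyclotomic p) P")
  define c where "c = lead_coeff P ^ (Suc (degree (prime_cyclotomic p)) - degree P)"
  have div: "smult c (prime_cyclotomic p) = P * q + r" and "r = 0 \<or> degree r < degree P"
    using pseudo_divmod[OF P(1) qr] unfolding c_def by auto
  moreover have "poly_int r (zeta p) = 0"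
    using arg_cong[OF div, of "\<lambda>X. poly_int X (zeta p)"]
    by (simp add: poly_int_add poly_int_smult poly_int_mult P_root poly_int_prime_cyclotomic_zeta[OF p1])
  ultimately have "r = 0" using B_min[of r] P(2) by fastforce
  have "c \<noteq> 0" unfolding c_def using P(1) by simp
  then have fac: "prime_cyclotomic p = P * smult (unit_factor c) (primitive_part q)"
    using div \<open>r = 0\<close> p1 P(3) content_prime_cyclotomic[of p]
    by (intro primitive_factor_of_smult) simp_all
  from prime_cyclotomic_irreducible[OF p this] show False
  proof
    assume "degree P = 0"
    then obtain a where "P = [:a:]" by (metis degree_eq_zeroE)
    then show False using P(1) P_root by (simp add: map_poly_pCons)
  next
    assume Q: "degree (smult (unit_factor c) (primitive_part q)) = 0"
    have "prime_cyclotomic p \<noteq> 0"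
      using coeff_prime_cyclotomic[of p 0] p1 by auto
    then have "smult (unit_factor c) (primitive_part q) \<noteq> 0" using fac by auto
    then have "degree (prime_cyclotomic p) = degree P"
      unfolding fac using degree_mult_eq[OF P(1)] Q by simp
    then show False
      using P(2) \<open>degree B < p - 1\<close> degree_prime_cyclotomic[of p] p1 by simp
  qed
qed

lemma zeta_int_combination_eq_0_imp_const:
  assumes p: "prime p" and sum: "(\<Sum>k<p. of_int (a k) * zeta p ^ k) = 0" and k: "k < p"
  shows "a k = a 0"
proof -
  have p1: "p > 1" using p prime_gt_1_nat by blast
  define A where "A = (\<Sum>k<p. monom (a k - a (p - 1)) k)"
  have coeff_A: "coeff A i = (if i < p then a i - a (p - 1) else 0)" for i
    by (simp add: A_def coeff_sum)
  have "poly_int A (zeta p) = (\<Sum>k<p. of_int (a k) * zeta p ^ k) - of_int (a (p - 1)) * (\<Sum>k<p. zeta p ^ k)"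
    by (simp add: A_def poly_int_sum poly_int_monom algebra_simps sum_subtractf sum_distrib_left
        sum_distrib_right)
  then have "poly_int A (zeta p) = 0" using sum zeta_sum_powers[OF p1] by simp
  moreover have "degree A < p - 1"
    using p1 by (intro degree_lessI) (auto simp: coeff_A intro!: arg_cong[where f = a])
  ultimately have "A = 0" using degree_poly_int_zeta_root[OF p] by fastforce
  then show ?thesis using coeff_A[of k] coeff_A[of 0] k p1 by simp
qed

text \<open>Comparing \<open>\<Sum>\<^sub>k N\<^sub>k \<zeta>\<^sup>k\<close> (with \<open>N\<^sub>k = |h\<^sup>-\<^sup>1(k)|\<close>) with \<open>c \<zeta>\<^sup>j\<close>, linear independence forces
  \<open>N\<^sub>k - c [k = j]\<close> to be constant; its sum is \<open>|U| - c\<close>.\<close>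
lemma card_zero_fiber_from_zeta_sum:
  assumes p: "prime p" and U: "finite U" "\<forall>x\<in>U. h x < p" and j: "j < p"
    and sum: "(\<Sum>x\<in>U. zeta p ^ h x) = of_int c * zeta p ^ j"
  shows "int p * int (card {x\<in>U. h x = 0}) = int (card U) + (if j = 0 then int p * c else 0) - c"
proof -
  define N where "N k = int (card {x\<in>U. h x = k})" for k
  define b where "b k = N k - (if k = j then c else 0)" for k
  have N_sum: "(\<Sum>k<p. N k) = int (card U)"
    using sum.group[OF U(1) finite_lessThan[of p], of h "\<lambda>_. 1 :: int"] U(2)
    by (simp add: N_def image_subset_iff)
  have "(\<Sum>x\<in>U. zeta p ^ h x) = (\<Sum>k<p. of_int (N k) * zeta p ^ k)"
    using sum.group[OF U(1) finite_lessThan[of p], of h "\<lambda>x. zeta p ^ h x", symmetric] U(2)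
    by (simp add: N_def image_subset_iff)
  moreover have "(\<Sum>k<p. of_int (if k = j then c else 0) * zeta p ^ k) = of_int c * zeta p ^ j"
  proof -
    have "(\<Sum>k<p. of_int (if k = j then c else 0) * zeta p ^ k)
        = (\<Sum>k<p. if k = j then of_int c * zeta p ^ k else 0)"
      by (intro sum.cong) auto
    then show ?thesis using j by simp
  qed
  ultimately have "(\<Sum>k<p. of_int (b k) * zeta p ^ k) = 0"
    using sum by (simp add: b_def algebra_simps sum_subtractf)
  then have "N k = b 0 + (if k = j then c else 0)" if "k < p" for k
    using zeta_int_combination_eq_0_imp_const[OF p _ that, of b] by (simp add: b_def[of k])
  then have "(\<Sum>k<p. N k) = (\<Sum>k<p. b 0 + (if k = j then c else 0))"
    by (intro sum.cong) auto
  also have "\<dots> = int p * b 0 + c"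
    using j by (simp add: sum.distrib sum.delta)
  finally show ?thesis
    using N_sum by (cases "j = 0") (simp_all add: N_def b_def algebra_simps)
qed

section \<open>The prime subfield and the trace\<close>

text \<open>The library's \<open>finite_field_power_card_eq_same\<close> needs the sort \<open>finite_field\<close>, which a
  type of sort \<open>{field, finite}\<close> is not known to have.\<close>
lemma finite_field_power_card_minus_one:
  fixes x :: "'a::{field,finite}"
  assumes "x \<noteq> 0"
  shows "x ^ (CARD('a) - 1) = 1"
proof -
  let ?U = "UNIV - {0 :: 'a}"
  have "bij_betw ((*) x) ?U ?U"
    using assms by (intro bij_betwI[where g = "\<lambda>y. y / x"]) auto
  then have "(\<Prod>y\<in>?U. x * y) = (\<Prod>y\<in>?U. y)"
    using prod.reindex_bij_betw[of "(*) x" ?U ?U "\<lambda>y. y"] by simp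
  moreover have "(\<Prod>y\<in>?U. x * y) = x ^ card ?U * (\<Prod>y\<in>?U. y)"
    by (simp add: prod.distrib)
  moreover have "(\<Prod>y\<in>?U. y) \<noteq> 0" by simp
  ultimately show ?thesis by (simp add: card_Diff_singleton)
qed

lemma finite_field_power_card:
  fixes x :: "'a::{field,finite}"
  shows "x ^ CARD('a) = x"
proof (cases "x = 0")
  case False
  have "CARD('a) = Suc (CARD('a) - 1)" by simp
  then show ?thesis
    by (metis False finite_field_power_card_minus_one power_Suc2 mult_1_left)
qed simp

locale prime_power_field =
  fixes p m :: nat and ty :: "'a::{field,finite} itself"
  assumes prime: "prime p" and char: "CHAR('a) = p" and card: "CARD('a) = p ^ m"
begin

lemma p_gt_1: "p > 1"
  using prime prime_gt_1_nat by blast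

lemma m_pos: "m > 0"
proof -
  have "card {0, 1 :: 'a} \<le> CARD('a)" by (rule card_mono) auto
  then show ?thesis using card by (cases m) auto
qed

lemma of_nat_eq_of_nat_iff: "(of_nat a :: 'a) = of_nat b \<longleftrightarrow> a mod p = b mod p"
proof -
  have "(of_nat a :: 'a) = of_nat b \<longleftrightarrow> a mod p = b mod p" if "a \<le> b" for a b
  proof -
    have "(of_nat a :: 'a) = of_nat b \<longleftrightarrow> (of_nat (b - a) :: 'a) = 0"
      using that by (auto simp: of_nat_diff)
    also have "\<dots> \<longleftrightarrow> p dvd b - a" using char of_nat_eq_0_iff_char_dvd by metis
    also have "\<dots> \<longleftrightarrow> a mod p = b mod p" using that by (metis mod_eq_dvd_iff_nat)
    finally show ?thesis .
  qed
  then show ?thesis by (metis nat_le_linear)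
qed

lemma of_nat_eq_of_nat_less_iff: "a < p \<Longrightarrow> b < p \<Longrightarrow> (of_nat a :: 'a) = of_nat b \<longleftrightarrow> a = b"
  by (simp add: of_nat_eq_of_nat_iff)

lemma of_nat_mod_char: "(of_nat (a mod p) :: 'a) = of_nat a"
  by (simp add: of_nat_eq_of_nat_iff)

lemma of_nat_char: "(of_nat p :: 'a) = 0"
  using char of_nat_CHAR by blast

lemma of_nat_neq_0: "0 < a \<Longrightarrow> a < p \<Longrightarrow> (of_nat a :: 'a) \<noteq> 0"
  using of_nat_eq_of_nat_less_iff[of a 0] p_gt_1 by simp

lemma frobenius_add: "((x :: 'a) + y) ^ p ^ i = x ^ p ^ i + y ^ p ^ i"
  using freshmans_dream'[of "p ^ i" i x y] char prime by simp

lemma frobenius_sum: "(\<Sum>j\<in>S. (g j :: 'a)) ^ p ^ i = (\<Sum>j\<in>S. g j ^ p ^ i)"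
  using freshmans_dream_sum'[of "p ^ i" i g S] char prime by simp

lemma power_card: "(x :: 'a) ^ p ^ m = x"
  using finite_field_power_card[of x] card by simp

definition prime_subfield :: "'a set" where
  "prime_subfield = of_nat ` {..<p}"

lemma of_nat_power_char: "(of_nat k :: 'a) ^ p = of_nat k"
proof (induction k)
  case (Suc k)
  then show ?case using frobenius_add[of "of_nat k" 1 1] by (simp add: add.commute)
qed (use p_gt_1 in simp)

lemma prime_subfield_eq: "prime_subfield = {y. y ^ p = y}"
proof (rule card_subset_eq)
  show sub: "prime_subfield \<subseteq> {y. y ^ p = y}"
    unfolding prime_subfield_def using of_nat_power_char by auto
  let ?P = "monom (1 :: 'a) p - [:0, 1:]"
  have "coeff ?P p = 1" using p_gt_1 by (simp add: coeff_eq_0)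
  then have "?P \<noteq> 0" by (metis coeff_0 zero_neq_one)
  have "{y. y ^ p = y} = {y. poly ?P y = 0}" by (simp add: poly_monom)
  also have "card \<dots> \<le> degree ?P" by (rule card_poly_roots_bound[OF \<open>?P \<noteq> 0\<close>])
  also have "\<dots> \<le> p"
    by (rule degree_diff_le[OF degree_monom_le]) (use p_gt_1 in simp)
  finally have "card {y :: 'a. y ^ p = y} \<le> p" .
  moreover have "card prime_subfield = p"
    unfolding prime_subfield_def by (subst card_image) (auto simp: inj_on_def of_nat_eq_of_nat_less_iff)
  moreover have "card prime_subfield \<le> card {y :: 'a. y ^ p = y}"
    by (rule card_mono[OF _ sub]) simp
  ultimately show "card prime_subfield = card {y :: 'a. y ^ p = y}" by simp
qed simp

lemma of_nat_in_prime_subfield: "of_nat k \<in> prime_subfield"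
  by (simp add: prime_subfield_eq of_nat_power_char)

lemma prime_subfield_cases:
  assumes "y \<in> prime_subfield"
  obtains k where "k < p" "y = of_nat k"
  using assms by (auto simp: prime_subfield_def)

lemma prime_subfield_inverse: "y \<in> prime_subfield \<Longrightarrow> inverse y \<in> prime_subfield"
  by (simp add: prime_subfield_eq power_inverse)

lemma prime_subfield_mult: "y \<in> prime_subfield \<Longrightarrow> z \<in> prime_subfield \<Longrightarrow> y * z \<in> prime_subfield"
  by (simp add: prime_subfield_eq power_mult_distrib)

lemma prime_subfield_divide: "y \<in> prime_subfield \<Longrightarrow> z \<in> prime_subfield \<Longrightarrow> y / z \<in> prime_subfield"
  by (simp add: divide_inverse prime_subfield_mult prime_subfield_inverse)

lemma card_prime_subfield_multiples:
  assumes "y \<in> prime_subfield" "z \<in> prime_subfield"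
  shows "card {c\<in>{..<p}. y = of_nat c * z} = (if z = 0 then if y = 0 then p else 0 else 1)"
proof (cases "z = 0")
  case False
  obtain b where b: "b < p" "y / z = of_nat b"
    using prime_subfield_divide[OF assms] by (rule prime_subfield_cases)
  have "y = of_nat c * z \<longleftrightarrow> c = b" if "c < p" for c
    using False b of_nat_eq_of_nat_less_iff[OF that b(1)] by (auto simp: field_simps)
  then have "{c\<in>{..<p}. y = of_nat c * z} = {b}" using b(1) by auto
  then show ?thesis using False by simp
qed simp

lemma card_nonzero_on_line:
  assumes y: "y \<in> prime_subfield" and z: "z \<in> prime_subfield" and covered: "z \<noteq> 0 \<Longrightarrow> y \<noteq> 0"
  shows "int (card {l\<in>{1..<p}. y - of_nat l * z \<noteq> 0})
    = (int p - 1) * (if y \<noteq> 0 then 1 else 0) - (if z \<noteq> 0 then 1 else 0)"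
proof (cases "z = 0")
  case True
  then have "{l\<in>{1..<p}. y - of_nat l * z \<noteq> 0} = (if y = 0 then {} else {1..<p})" by auto
  then show ?thesis using True p_gt_1 by (simp add: of_nat_diff)
next
  case False
  obtain l\<^sub>0 where l\<^sub>0: "l\<^sub>0 < p" "y / z = of_nat l\<^sub>0"
    using prime_subfield_divide[OF y z] by (rule prime_subfield_cases)
  have "l\<^sub>0 \<noteq> 0"
  proof
    assume "l\<^sub>0 = 0"
    with l\<^sub>0(2) False covered show False by simp
  qed
  have root: "y = of_nat l * z \<longleftrightarrow> l = l\<^sub>0" if "l < p" for l
    using False l\<^sub>0 of_nat_eq_of_nat_less_iff[OF that l\<^sub>0(1)] by (auto simp: field_simps)
  have "{l\<in>{1..<p}. y - of_nat l * z \<noteq> 0} = {1..<p} - {l\<^sub>0}"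
  proof (rule set_eqI)
    fix l
    show "l \<in> {l\<in>{1..<p}. y - of_nat l * z \<noteq> 0} \<longleftrightarrow> l \<in> {1..<p} - {l\<^sub>0}"
      using root[of l] by (cases "l < p") auto
  qed
  then show ?thesis using False covered \<open>l\<^sub>0 \<noteq> 0\<close> l\<^sub>0(1) p_gt_1 by (simp add: of_nat_diff)
qed

text \<open>The inverse of \<open>\<alpha> \<mapsto> \<alpha>\<^sup>n\<close> on \<open>\<int>\<^sub>p\<^sup>*\<close> is \<open>\<gamma> \<mapsto> \<gamma>\<^sup>u\<close> with \<open>n u \<equiv> 1 (mod p - 1)\<close> (Bezout).\<close>
lemma prime_subfield_root:
  assumes n: "n \<noteq> 0" "coprime n (p - 1)" and \<gamma>: "\<gamma> \<in> prime_subfield" "\<gamma> \<noteq> 0"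
  obtains \<alpha> where "\<alpha> \<in> prime_subfield" "\<alpha> \<noteq> 0" "\<alpha> ^ n = \<gamma>"
proof -
  obtain u v where uv: "n * u = (p - 1) * v + 1"
    using bezout_nat[OF n(1), of "p - 1"] n(2) by auto
  have "\<gamma> ^ p = \<gamma>" using \<gamma>(1) by (simp add: prime_subfield_eq)
  then have "\<gamma> ^ (p - 1) = 1"
    using \<gamma>(2) p_gt_1 by (metis Suc_diff_1 power_Suc mult_cancel_left1 less_trans zero_less_one)
  have "(\<gamma> ^ u) ^ n = \<gamma> ^ (n * u)" by (metis power_mult mult.commute)
  also have "\<dots> = (\<gamma> ^ (p - 1)) ^ v * \<gamma>" by (simp only: uv power_add power_mult power_one_right)
  finally have "(\<gamma> ^ u) ^ n = \<gamma>" using \<open>\<gamma> ^ (p - 1) = 1\<close> by simp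
  moreover have "\<gamma> ^ u \<in> prime_subfield"
    using \<gamma>(1) by (induction u) (auto intro: prime_subfield_mult simp: of_nat_in_prime_subfield[of 1, simplified])
  ultimately show ?thesis using that \<gamma>(2) by fastforce
qed

abbreviation trace :: "'a \<Rightarrow> 'a" where
  "trace \<equiv> trace_elem p m"

lemma trace_add: "trace (x + y) = trace x + trace y"
  by (simp add: trace_elem_def frobenius_add sum.distrib)

lemma trace_scale: "c \<in> prime_subfield \<Longrightarrow> trace (c * x) = c * trace x"
proof -
  assume "c \<in> prime_subfield"
  then have "c ^ p ^ i = c" for i
    by (induction i) (simp_all add: prime_subfield_eq power_mult flip: power_Suc2)
  then show ?thesis by (simp add: trace_elem_def power_mult_distrib sum_distrib_left)
qed

lemma trace_0: "trace 0 = 0"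
  using trace_scale[OF of_nat_in_prime_subfield, of 0 0] by simp

lemma trace_uminus: "trace (- x) = - trace x"
proof -
  have "trace x + trace (- x) = 0" using trace_add[of x "- x"] trace_0 by simp
  then show ?thesis by (simp add: add_eq_0_iff)
qed

lemma trace_diff: "trace (x - y) = trace x - trace y"
  using trace_add[of x "- y"] trace_uminus[of y] by simp

text \<open>The Frobenius map permutes the summands \<open>x, x\<^sup>p, \<dots>, x\<^bsup>p\<^sup>m\<^sup>-\<^sup>1\<^esup>\<close> cyclically, as \<open>x\<^bsup>p\<^sup>m\<^esup> = x\<close>.\<close>
lemma trace_in_prime_subfield: "trace x \<in> prime_subfield"
proof -
  have "trace x ^ p = (\<Sum>i<m. x ^ p ^ Suc i)"
    using frobenius_sum[of "\<lambda>i. x ^ p ^ i" "{..<m}" 1]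
    by (simp add: trace_elem_def flip: power_mult power_Suc2)
  also have "\<dots> = (\<Sum>i<m. x ^ p ^ i)"
    using sum.lessThan_Suc_shift[of "\<lambda>i. x ^ p ^ i" m] power_card[of x] by simp
  finally show ?thesis by (simp add: prime_subfield_eq trace_elem_def)
qed

lemma Tr_less: "Tr p m (x :: 'a) < p"
  and of_nat_Tr: "(of_nat (Tr p m x) :: 'a) = trace x"
proof -
  obtain k where k: "k < p" "trace x = of_nat k"
    using trace_in_prime_subfield prime_subfield_cases by blast
  have "Tr p m x = k"
    unfolding Tr_def using k of_nat_eq_of_nat_less_iff by (intro the_equality) auto
  then show "Tr p m x < p" "of_nat (Tr p m x) = trace x" using k by simp_all
qed

lemma Tr_eq_iff: "k < p \<Longrightarrow> Tr p m (x :: 'a) = k \<longleftrightarrow> trace x = of_nat k"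
  using Tr_less[of x] of_nat_eq_of_nat_less_iff of_nat_Tr by metis

lemma Tr_eq_0_iff: "Tr p m (x :: 'a) = 0 \<longleftrightarrow> trace x = 0"
  using Tr_eq_iff[of 0 x] p_gt_1 by simp

lemma Tr_eq_Tr_iff: "Tr p m (x :: 'a) = Tr p m y \<longleftrightarrow> trace x = trace y"
  using Tr_eq_iff[OF Tr_less, of y x] of_nat_Tr by metis

lemma Tr_0: "Tr p m (0 :: 'a) = 0"
  by (simp add: Tr_eq_0_iff trace_0)

lemma Tr_add: "Tr p m (x + y :: 'a) = (Tr p m x + Tr p m y) mod p"
  using Tr_eq_iff[of "(Tr p m x + Tr p m y) mod p" "x + y"] p_gt_1
  by (simp add: trace_add of_nat_mod_char of_nat_Tr)

lemma Tr_scale: "k < p \<Longrightarrow> Tr p m (of_nat k * x :: 'a) = (k * Tr p m x) mod p"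
  using Tr_eq_iff[of "(k * Tr p m x) mod p" "of_nat k * x"] p_gt_1
  by (simp add: trace_scale[OF of_nat_in_prime_subfield] of_nat_mod_char of_nat_Tr)

lemma Tr_uminus: "Tr p m (- x :: 'a) = (p - Tr p m x) mod p"
  using Tr_eq_iff[of "(p - Tr p m x) mod p" "- x"] p_gt_1 Tr_less[of x] of_nat_char
  by (simp add: trace_uminus of_nat_mod_char of_nat_diff of_nat_Tr)

text \<open>The trace is a polynomial of degree \<open>p\<^bsup>m-1\<^esup> < |F|\<close>, so it cannot vanish identically.\<close>
lemma trace_nonzero: "\<exists>x. trace x \<noteq> 0"
proof -
  define P :: "'a poly" where "P = (\<Sum>i<m. monom 1 (p ^ i))"
  have poly_P: "poly P x = trace x" for x
    by (simp add: P_def trace_elem_def poly_sum poly_monom)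
  have "coeff P (p ^ (m - 1)) = (\<Sum>i<m. if p ^ i = p ^ (m - 1) then 1 else 0)"
    by (simp add: P_def coeff_sum coeff_monom)
  also have "\<dots> = (\<Sum>i\<in>{m - 1}. 1)"
    using m_pos p_gt_1 by (intro sum.mono_neutral_cong_right) auto
  finally have "P \<noteq> 0" by auto
  have "degree P \<le> p ^ (m - 1)"
  proof (rule degree_le, intro allI impI)
    fix i assume i: "p ^ (m - 1) < i"
    have "p ^ j \<noteq> i" if "j < m" for j
      using i power_increasing[of j "m - 1" p] that p_gt_1 by auto
    then show "coeff P i = 0" by (simp add: P_def coeff_sum coeff_monom)
  qed
  then have "card {x. poly P x = 0} \<le> p ^ (m - 1)"
    using card_poly_roots_bound[OF \<open>P \<noteq> 0\<close>] by simp
  also have "\<dots> < CARD('a)"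
    using p_gt_1 m_pos card by (simp add: power_strict_increasing)
  finally have "{x. poly P x = 0} \<noteq> UNIV" by auto
  then show ?thesis using poly_P by auto
qed

lemma zeta_power_Tr_add: "zeta p ^ Tr p m (x + y :: 'a) = zeta p ^ Tr p m x * zeta p ^ Tr p m y"
  using p_gt_1 by (simp add: Tr_add zeta_power_mod power_add)

lemma sum_zeta_power_Tr:
  assumes "\<omega> \<noteq> 0"
  shows "(\<Sum>x\<in>UNIV. zeta p ^ Tr p m (\<omega> * x :: 'a)) = 0"
proof -
  let ?S = "\<Sum>x\<in>UNIV. zeta p ^ Tr p m (x :: 'a)"
  obtain y :: 'a where "trace y \<noteq> 0" using trace_nonzero by blast
  then have "trace (y / trace y) = 1"
    using trace_scale[OF prime_subfield_inverse[OF trace_in_prime_subfield], of y y]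
    by (simp add: divide_inverse mult.commute)
  then obtain c :: 'a where "Tr p m c = 1" using Tr_eq_iff[of 1] p_gt_1 by auto
  have "?S = (\<Sum>x\<in>UNIV. zeta p ^ Tr p m (x + c))"
    by (rule sum.reindex_bij_witness[of _ "\<lambda>x. x + c" "\<lambda>x. x - c"]) auto
  also have "\<dots> = ?S * zeta p"
    by (simp add: zeta_power_Tr_add \<open>Tr p m c = 1\<close> sum_distrib_right)
  finally have "?S = 0" using zeta_neq_1[OF p_gt_1] by (simp add: algebra_simps)
  moreover have "(\<Sum>x\<in>UNIV. zeta p ^ Tr p m (\<omega> * x)) = ?S"
    using assms by (intro sum.reindex_bij_witness[of _ "\<lambda>y. y / \<omega>" "\<lambda>x. \<omega> * x"]) auto
  ultimately show ?thesis by simp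
qed

lemma card_Tr_eq_0:
  assumes "\<omega> \<noteq> 0"
  shows "p * card {x :: 'a. Tr p m (\<omega> * x) = 0} = p ^ m"
proof -
  have "(\<Sum>x\<in>UNIV. zeta p ^ Tr p m (\<omega> * x)) = of_int 0 * zeta p ^ 0"
    using sum_zeta_power_Tr[OF assms] by simp
  from card_zero_fiber_from_zeta_sum[OF prime _ _ _ this]
  have "int (p * card {x :: 'a. Tr p m (\<omega> * x) = 0}) = int (p ^ m)"
    using Tr_less p_gt_1 card by simp
  then show ?thesis using of_nat_eq_iff by blast
qed


section \<open>Codes defined by the trace\<close>

definition trace_codeword :: "'a set \<Rightarrow> 'a \<Rightarrow> 'a \<Rightarrow> nat" where
  "trace_codeword D \<omega> = restrict (\<lambda>d. Tr p m (\<omega> * d)) D"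

definition trace_weight :: "'a set \<Rightarrow> 'a \<Rightarrow> nat" where
  "trace_weight D \<omega> = card {d\<in>D. Tr p m (\<omega> * d) \<noteq> 0}"

lemma code_D_eq_range: "code_D p m D = range (trace_codeword D)"
  by (simp add: code_D_def trace_codeword_def)

lemma trace_codeword_0: "trace_codeword D 0 = restrict (\<lambda>_. 0) D"
  by (simp add: trace_codeword_def Tr_0)

lemma trace_codeword_scale:
  "k < p \<Longrightarrow> trace_codeword D (of_nat k * a) = restrict (\<lambda>d. (k * trace_codeword D a d) mod p) D"
  by (auto simp: trace_codeword_def Tr_scale mult.assoc)

lemma cw_supp_trace_codeword: "cw_supp D (trace_codeword D a) = {d\<in>D. trace (a * d) \<noteq> 0}"
  by (auto simp: cw_supp_def trace_codeword_def Tr_eq_0_iff simp del: neq0_conv)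

lemma hamming_dist_trace_codeword:
  "hamming_dist D (trace_codeword D a) (trace_codeword D b) = trace_weight D (a - b)"
proof -
  have "Tr p m (a * d) \<noteq> Tr p m (b * d) \<longleftrightarrow> Tr p m ((a - b) * d) \<noteq> 0" for d
    by (simp add: Tr_eq_Tr_iff Tr_eq_0_iff left_diff_distrib trace_diff)
  then show ?thesis
    unfolding hamming_dist_def trace_weight_def trace_codeword_def
    by (intro arg_cong[where f = card]) auto
qed

context
  fixes D :: "'a set"
  assumes weight_pos: "\<And>\<omega>. \<omega> \<noteq> 0 \<Longrightarrow> trace_weight D \<omega> > 0"
begin

lemma inj_trace_codeword: "inj (trace_codeword D)"
proof (rule injI)
  fix a b assume "trace_codeword D a = trace_codeword D b"
  then have "hamming_dist D (trace_codeword D a) (trace_codeword D b) = 0"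
    by (simp add: hamming_dist_def)
  then have "trace_weight D (a - b) = 0" by (simp add: hamming_dist_trace_codeword)
  then show "a = b" using weight_pos[of "a - b"] by auto
qed

lemma card_code_D: "card (code_D p m D) = p ^ m"
  using card_image[OF inj_trace_codeword] card by (simp add: code_D_eq_range)

lemma min_distance_code_D:
  assumes "\<And>\<omega>. \<omega> \<noteq> 0 \<Longrightarrow> d \<le> trace_weight D \<omega>" and "\<omega>\<^sub>0 \<noteq> 0" "trace_weight D \<omega>\<^sub>0 = d"
  shows "min_distance D (code_D p m D) = d"
proof -
  have "{hamming_dist D u v |u v. u \<in> code_D p m D \<and> v \<in> code_D p m D \<and> u \<noteq> v}
      = trace_weight D ` (UNIV - {0})" (is "?H = _")
  proof
    show "?H \<subseteq> trace_weight D ` (UNIV - {0})"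
      by (auto simp: code_D_eq_range hamming_dist_trace_codeword)
    show "trace_weight D ` (UNIV - {0}) \<subseteq> ?H"
    proof
      fix w assume "w \<in> trace_weight D ` (UNIV - {0})"
      then obtain \<omega> where "\<omega> \<noteq> 0" "w = trace_weight D \<omega>" by auto
      then have "w = hamming_dist D (trace_codeword D \<omega>) (trace_codeword D 0)"
        "trace_codeword D \<omega> \<noteq> trace_codeword D 0"
        using inj_trace_codeword by (auto simp: hamming_dist_trace_codeword inj_eq)
      then show "w \<in> ?H" unfolding code_D_eq_range by blast
    qed
  qed
  then show ?thesis
    unfolding min_distance_def using assms by (intro Min_eqI) auto
qed

end

lemma sum_trace_weight_line:
  assumes covered: "\<And>d. d \<in> D \<Longrightarrow> trace (b * d) \<noteq> 0 \<Longrightarrow> trace (a * d) \<noteq> 0"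
  shows "(\<Sum>l\<in>{1..<p}. int (trace_weight D (a - of_nat l * b)))
    = (int p - 1) * int (trace_weight D a) - int (trace_weight D b)"
proof -
  have count: "int (card {l\<in>{1..<p}. trace ((a - of_nat l * b) * d) \<noteq> 0})
      = (int p - 1) * (if trace (a * d) \<noteq> 0 then 1 else 0) - (if trace (b * d) \<noteq> 0 then 1 else 0)"
    if "d \<in> D" for d
    using card_nonzero_on_line[OF trace_in_prime_subfield trace_in_prime_subfield covered[OF that]]
    by (simp add: left_diff_distrib trace_diff mult.assoc trace_scale[OF of_nat_in_prime_subfield])
  have weight: "int (trace_weight D w) = (\<Sum>d\<in>D. if trace (w * d) \<noteq> 0 then 1 else 0)" for w
    by (simp add: trace_weight_def Tr_eq_0_iff sum.If_cases Int_def)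
  have "(\<Sum>l\<in>{1..<p}. int (trace_weight D (a - of_nat l * b)))
      = (\<Sum>d\<in>D. int (card {l\<in>{1..<p}. trace ((a - of_nat l * b) * d) \<noteq> 0}))"
    unfolding weight by (subst sum.swap) (simp add: sum.If_cases Int_def)
  also have "\<dots> = (\<Sum>d\<in>D. (int p - 1) * (if trace (a * d) \<noteq> 0 then 1 else 0)
      - (if trace (b * d) \<noteq> 0 then 1 else 0))"
    by (rule sum.cong[OF refl]) (rule count)
  also have "\<dots> = (int p - 1) * int (trace_weight D a) - int (trace_weight D b)"
    by (simp add: weight sum_subtractf sum_distrib_left)
  finally show ?thesis .
qed

theorem minimal_code_if_weight_ratio:
  assumes bounds: "\<And>\<omega>. \<omega> \<noteq> 0 \<Longrightarrow> w\<^sub>m\<^sub>i\<^sub>n \<le> int (trace_weight D \<omega>) \<and> int (trace_weight D \<omega>) \<le> w\<^sub>m\<^sub>a\<^sub>x"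
    and ratio: "(int p - 1) * w\<^sub>m\<^sub>a\<^sub>x < int p * w\<^sub>m\<^sub>i\<^sub>n"
  shows "minimal_code p D (code_D p m D)"
  unfolding minimal_code_def code_D_eq_range
proof (safe)
  fix a b
  assume nonzero: "trace_codeword D a \<noteq> restrict (\<lambda>_. 0) D"
    and covers: "cw_supp D (trace_codeword D b) \<subseteq> cw_supp D (trace_codeword D a)"
  show "\<exists>i<p. trace_codeword D b = restrict (\<lambda>d. (i * trace_codeword D a d) mod p) D"
  proof (rule ccontr)
    assume not_multiple: "\<not> ?thesis"
    have not_scalar: "b \<noteq> of_nat i * a" if "i < p" for i
      using not_multiple trace_codeword_scale[OF that] that by auto
    then have "b \<noteq> 0" using p_gt_1 by force
    have line: "a - of_nat l * b \<noteq> 0" if l: "l \<in> {1..<p}" for l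
    proof
      assume "a - of_nat l * b = 0"
      then have "b = inverse (of_nat l) * a" using of_nat_neq_0[of l] l by auto
      moreover obtain i where "i < p" "inverse (of_nat l) = (of_nat i :: 'a)"
        using prime_subfield_inverse[OF of_nat_in_prime_subfield] by (blast elim: prime_subfield_cases)
      ultimately show False using not_scalar by auto
    qed
    have "a \<noteq> 0" using nonzero trace_codeword_0 by auto
    have "trace (a * d) \<noteq> 0" if "d \<in> D" "trace (b * d) \<noteq> 0" for d
      using covers that by (auto simp: cw_supp_trace_codeword)
    from sum_trace_weight_line[OF this]
    have "(int p - 1) * w\<^sub>m\<^sub>i\<^sub>n \<le> (int p - 1) * int (trace_weight D a) - int (trace_weight D b)"
      using sum_mono[of "{1..<p}" "\<lambda>_. w\<^sub>m\<^sub>i\<^sub>n" "\<lambda>l. int (trace_weight D (a - of_nat l * b))"]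
        bounds line p_gt_1 by (simp add: of_nat_diff)
    moreover have "(int p - 1) * int (trace_weight D a) \<le> (int p - 1) * w\<^sub>m\<^sub>a\<^sub>x"
      using bounds[OF \<open>a \<noteq> 0\<close>] p_gt_1 by (intro mult_left_mono) auto
    ultimately show False using bounds[OF \<open>b \<noteq> 0\<close>] ratio by (simp add: algebra_simps)
  qed
qed

end

section \<open>Weakly regular plateaued balanced functions\<close>

locale wrpb_function = prime_power_field p m ty for p m :: nat and ty :: "'a::{field,finite} itself" +
  fixes f :: "'a \<Rightarrow> nat" and s :: nat and \<epsilon> :: int
  assumes WRPB: "WRPB p m s f" and sign: "has_sign p m s f \<epsilon>" and even_m_s: "even (m + s)"
begin

abbreviation S where "S \<equiv> support_walsh p m s f"

definition f_dual :: "'a \<Rightarrow> nat" where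
  "f_dual = (SOME g. (\<forall>\<omega>. g \<omega> < p) \<and> (\<forall>\<omega>. \<omega> \<notin> S \<longrightarrow> g \<omega> = 0) \<and>
     (\<forall>\<omega>\<in>S. walsh p m f \<omega> = of_int \<epsilon> * sqrt_pstar p ^ (m + s) * zeta p ^ g \<omega>))"

definition \<kappa> :: nat where "\<kappa> = (m + s) div 2"

definition \<epsilon>\<^sub>0 :: int where "\<epsilon>\<^sub>0 = \<epsilon> * eta0_minus1 p ^ \<kappa>"

lemma f_less: "f x < p"
  using WRPB by (simp add: WRPB_def)

lemma f_0: "f 0 = 0"
  using WRPB by (simp add: WRPB_def)

lemma f_dual_less: "f_dual \<omega> < p"
  and walsh_on_S_sign: "\<omega> \<in> S \<Longrightarrow> walsh p m f \<omega> = of_int \<epsilon> * sqrt_pstar p ^ (m + s) * zeta p ^ f_dual \<omega>"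
proof -
  have "\<exists>g. (\<forall>\<omega>. g \<omega> < p) \<and> (\<forall>\<omega>. \<omega> \<notin> S \<longrightarrow> g \<omega> = 0) \<and>
     (\<forall>\<omega>\<in>S. walsh p m f \<omega> = of_int \<epsilon> * sqrt_pstar p ^ (m + s) * zeta p ^ g \<omega>)"
    using sign by (auto simp: has_sign_def)
  from someI_ex[OF this] show "f_dual \<omega> < p"
    and "\<omega> \<in> S \<Longrightarrow> walsh p m f \<omega> = of_int \<epsilon> * sqrt_pstar p ^ (m + s) * zeta p ^ f_dual \<omega>"
    unfolding f_dual_def by blast+
qed

lemma \<epsilon>\<^sub>0_cases: "\<epsilon>\<^sub>0 = 1 \<or> \<epsilon>\<^sub>0 = -1"
proof -
  have "\<epsilon> = 1 \<or> \<epsilon> = -1" using sign by (auto simp: has_sign_def)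
  moreover have "eta0_minus1 p ^ \<kappa> = 1 \<or> eta0_minus1 p ^ \<kappa> = -1"
    by (cases "even \<kappa>") (auto simp: eta0_minus1_def)
  ultimately show ?thesis by (auto simp: \<epsilon>\<^sub>0_def)
qed

lemma walsh_on_S:
  assumes "\<omega> \<in> S"
  shows "walsh p m f \<omega> = of_int (\<epsilon>\<^sub>0 * int p ^ \<kappa>) * zeta p ^ f_dual \<omega>"
proof -
  have "sqrt_pstar p ^ 2 = of_int (eta0_minus1 p * int p)"
    by (simp add: sqrt_pstar_def eta0_minus1_def power_mult_distrib flip: of_real_power)
  moreover have "m + s = 2 * \<kappa>" using even_m_s by (simp add: \<kappa>_def)
  ultimately have "sqrt_pstar p ^ (m + s) = of_int ((eta0_minus1 p * int p) ^ \<kappa>)"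
    by (simp add: power_mult)
  then show ?thesis
    using assms by (simp add: walsh_on_S_sign \<epsilon>\<^sub>0_def power_mult_distrib mult.assoc)
qed

lemma walsh_off_S: "\<omega> \<notin> S \<Longrightarrow> walsh p m f \<omega> = 0"
  using WRPB by (auto simp: WRPB_def plateaued_def support_walsh_def)

lemma zero_notin_S: "0 \<notin> S"
  using WRPB p_gt_1 by (simp add: WRPB_def balanced_def support_walsh_def)

lemma walsh_eq_sum_zeta:
  "walsh p m f \<omega> = (\<Sum>x\<in>UNIV. zeta p ^ ((f x + p - Tr p m (\<omega> * x)) mod p))"
  by (simp add: walsh_def zeta_powi_diff f_less Tr_less)

definition agree_count :: "'a \<Rightarrow> nat" where
  "agree_count \<omega> = card {x. f x = Tr p m (\<omega> * x)}"

definition deviation :: "'a \<Rightarrow> int" where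
  "deviation \<omega> = (if \<omega> \<in> S then if f_dual \<omega> = 0 then int p - 1 else -1 else 0)"

lemma agree_count_eq:
  "int p * int (agree_count \<omega>) = int p ^ m + \<epsilon>\<^sub>0 * int p ^ \<kappa> * deviation \<omega>"
proof -
  let ?h = "\<lambda>x. (f x + p - Tr p m (\<omega> * x)) mod p"
  define c where "c = (if \<omega> \<in> S then \<epsilon>\<^sub>0 * int p ^ \<kappa> else 0)"
  define j where "j = (if \<omega> \<in> S then f_dual \<omega> else 0)"
  have "(\<Sum>x\<in>UNIV. zeta p ^ ?h x) = of_int c * zeta p ^ j"
    by (simp flip: walsh_eq_sum_zeta add: walsh_on_S walsh_off_S c_def j_def)
  from card_zero_fiber_from_zeta_sum[OF prime _ _ _ this]
  have "int p * int (card {x \<in> UNIV. ?h x = 0}) = int (p ^ m) + (if j = 0 then int p * c else 0) - c"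
    using f_dual_less[of \<omega>] p_gt_1 card by (simp add: j_def)
  moreover have "{x \<in> UNIV. ?h x = 0} = {x. f x = Tr p m (\<omega> * x)}"
    by (simp add: add_diff_mod_eq_0_iff f_less Tr_less)
  ultimately show ?thesis
    by (auto simp: agree_count_def deviation_def c_def j_def algebra_simps)
qed

lemma card_f_eq_0: "p * card {x. f x = 0} = p ^ m"
proof -
  have "int p * int (card {x. f x = 0}) = int p ^ m"
    using agree_count_eq[of 0] zero_notin_S by (simp add: agree_count_def Tr_0 deviation_def)
  then show ?thesis by (metis of_nat_eq_iff of_nat_mult of_nat_power)
qed

lemma agree_count_scale:
  assumes "c \<in> {1..<p}"
  shows "agree_count (of_nat c * \<omega>) = agree_count \<omega>"
proof -
  obtain t where t: "t > 0" "even t" "coprime (t - 1) (p - 1)"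
    and hom: "\<And>a x. a \<in> {1..<p} \<Longrightarrow> f (of_nat a * x) = (a ^ t * f x) mod p"
    using WRPB by (auto simp: WRPB_def coprime_iff_gcd_eq_1)
  have "t - 1 \<noteq> 0"
  proof
    assume "t - 1 = 0"
    with t(1) have "t = 1" by simp
    with t(2) show False by simp
  qed
  have "(of_nat c :: 'a) \<noteq> 0" using assms by (intro of_nat_neq_0) auto
  then obtain \<alpha> where \<alpha>: "\<alpha> \<in> prime_subfield" "\<alpha> \<noteq> 0" "\<alpha> ^ (t - 1) = of_nat c"
    using prime_subfield_root[OF \<open>t - 1 \<noteq> 0\<close> t(3) of_nat_in_prime_subfield] by blast
  obtain a where "a < p" and \<alpha>_a: "\<alpha> = of_nat a" using \<alpha>(1) by (rule prime_subfield_cases)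
  then have a: "a \<in> {1..<p}" using \<alpha>(2) by (cases "a = 0") auto
  have \<alpha>_t: "\<alpha> ^ t = of_nat c * \<alpha>"
    using power_Suc2[of \<alpha> "t - 1"] \<alpha>(3) t(1) by simp
  have key: "f (\<alpha> * x) = Tr p m (of_nat c * \<omega> * (\<alpha> * x)) \<longleftrightarrow> f x = Tr p m (\<omega> * x)" for x
  proof -
    have "(of_nat (f (\<alpha> * x)) :: 'a) = \<alpha> ^ t * of_nat (f x)"
      using hom[OF a] by (simp add: \<alpha>_a of_nat_mod_char)
    moreover have "trace (of_nat c * \<omega> * (\<alpha> * x)) = \<alpha> ^ t * trace (\<omega> * x)"
      using trace_scale[OF prime_subfield_mult[OF of_nat_in_prime_subfield \<alpha>(1)], of c "\<omega> * x"]
      by (simp add: \<alpha>_t ac_simps)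
    ultimately show ?thesis
      using \<alpha>(2) by (simp add: eq_commute[of "f _"] Tr_eq_iff f_less)
  qed
  have "{y. f y = Tr p m (of_nat c * \<omega> * y)} = (*) \<alpha> ` {x. f x = Tr p m (\<omega> * x)}"
  proof (intro set_eqI iffI)
    fix y assume "y \<in> {y. f y = Tr p m (of_nat c * \<omega> * y)}"
    then have "y / \<alpha> \<in> {x. f x = Tr p m (\<omega> * x)}" using key[of "y / \<alpha>"] \<alpha>(2) by simp
    then show "y \<in> (*) \<alpha> ` {x. f x = Tr p m (\<omega> * x)}"
      using \<alpha>(2) by (intro image_eqI[where x = "y / \<alpha>"]) auto
  qed (use key in auto)
  moreover have "inj_on ((*) \<alpha>) A" for A using \<alpha>(2) by (auto intro: inj_onI)
  ultimately show ?thesis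
    by (simp add: agree_count_def card_image mult.assoc)
qed

definition zero_count :: "'a \<Rightarrow> nat" where
  "zero_count \<omega> = card {x. f x = 0 \<and> Tr p m (\<omega> * x) = 0}"

lemma sum_agree_count_line:
  "(\<Sum>c<p. agree_count (of_nat c * \<omega>)) = p * zero_count \<omega> + card {x. Tr p m (\<omega> * x) \<noteq> 0}"
proof -
  have per_x: "card {c\<in>{..<p}. f x = Tr p m (of_nat c * \<omega> * x)}
      = (if Tr p m (\<omega> * x) = 0 then if f x = 0 then p else 0 else 1)" for x
  proof -
    have "f x = Tr p m (of_nat c * \<omega> * x) \<longleftrightarrow> of_nat (f x) = of_nat c * trace (\<omega> * x)" for c
      using Tr_eq_iff[OF f_less[of x], of "of_nat c * \<omega> * x"]
      by (simp add: eq_commute[of "f x"] eq_commute[of "of_nat (f x)"] mult.assoc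
          trace_scale[OF of_nat_in_prime_subfield])
    then have "card {c\<in>{..<p}. f x = Tr p m (of_nat c * \<omega> * x)}
        = card {c\<in>{..<p}. of_nat (f x) = of_nat c * trace (\<omega> * x)}" by simp
    also have "\<dots> = (if trace (\<omega> * x) = 0 then if (of_nat (f x) :: 'a) = 0 then p else 0 else 1)"
      by (intro card_prime_subfield_multiples of_nat_in_prime_subfield trace_in_prime_subfield)
    finally show ?thesis
      using of_nat_eq_of_nat_less_iff[OF f_less, of 0 x] p_gt_1 by (simp add: Tr_eq_0_iff)
  qed
  have "(\<Sum>c<p. agree_count (of_nat c * \<omega>))
      = (\<Sum>c<p. \<Sum>x\<in>UNIV. if f x = Tr p m (of_nat c * \<omega> * x) then 1 else 0)"
    by (simp add: agree_count_def sum.If_cases mult.assoc)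
  also have "\<dots> = (\<Sum>x\<in>UNIV. card {c\<in>{..<p}. f x = Tr p m (of_nat c * \<omega> * x)})"
    by (subst sum.swap) (simp add: sum.If_cases Int_def)
  also have "\<dots> = (\<Sum>x\<in>UNIV. p * (if f x = 0 \<and> Tr p m (\<omega> * x) = 0 then 1 else 0)
      + (if Tr p m (\<omega> * x) \<noteq> 0 then 1 else 0))"
    unfolding per_x by (intro sum.cong refl) auto
  also have "\<dots> = p * zero_count \<omega> + card {x. Tr p m (\<omega> * x) \<noteq> 0}"
    by (simp add: sum.distrib sum.If_cases zero_count_def flip: sum_distrib_left)
  finally show ?thesis .
qed

lemma agree_count_0_add_line:
  "agree_count 0 + (p - 1) * agree_count \<omega> = p * zero_count \<omega> + card {x. Tr p m (\<omega> * x) \<noteq> 0}"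
proof -
  have "{..<p} = insert 0 {1..<p}" using p_gt_1 by auto
  then have "(\<Sum>c<p. agree_count (of_nat c * \<omega>))
      = agree_count 0 + (\<Sum>c\<in>{1..<p}. agree_count (of_nat c * \<omega>))" by simp
  also have "(\<Sum>c\<in>{1..<p}. agree_count (of_nat c * \<omega>)) = (\<Sum>c\<in>{1..<p}. agree_count \<omega>)"
    by (rule sum.cong) (simp_all add: agree_count_scale)
  finally show ?thesis using sum_agree_count_line[of \<omega>] by simp
qed

lemma zero_count_eq:
  assumes "\<omega> \<noteq> 0"
  shows "int p ^ 2 * int (zero_count \<omega>) = int p ^ m + (int p - 1) * \<epsilon>\<^sub>0 * int p ^ \<kappa> * deviation \<omega>"
proof -
  have line: "int (agree_count 0) + (int p - 1) * int (agree_count \<omega>)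
      = int p * int (zero_count \<omega>) + int (card {x. Tr p m (\<omega> * x) \<noteq> 0})"
    using agree_count_0_add_line[of \<omega>] p_gt_1
    by (metis of_nat_1 of_nat_add of_nat_diff of_nat_mult less_imp_le)
  have "card {x. Tr p m (\<omega> * x) \<noteq> 0} + card {x. Tr p m (\<omega> * x) = 0} = p ^ m"
  proof -
    have "{x. Tr p m (\<omega> * x) \<noteq> 0} \<union> {x. Tr p m (\<omega> * x) = 0} = UNIV" by auto
    moreover have "card ({x. Tr p m (\<omega> * x) \<noteq> 0} \<union> {x. Tr p m (\<omega> * x) = 0})
        = card {x. Tr p m (\<omega> * x) \<noteq> 0} + card {x. Tr p m (\<omega> * x) = 0}"
      by (rule card_Un_disjoint) auto
    ultimately show ?thesis using card by simp
  qed
  then have kernel: "int (card {x. Tr p m (\<omega> * x) \<noteq> 0}) + int (card {x. Tr p m (\<omega> * x) = 0}) = int p ^ m"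
    by (metis of_nat_add of_nat_power)
  have kernel': "int p * int (card {x. Tr p m (\<omega> * x) = 0}) = int p ^ m"
    using card_Tr_eq_0[OF assms] by (metis of_nat_mult of_nat_power)
  have agree_0: "int p * int (agree_count 0) = int p ^ m"
    using agree_count_eq[of 0] zero_notin_S by (simp add: deviation_def)
  have "P\<^sup>2 * N = Q + (P - 1) * X"
    if "A\<^sub>0 + (P - 1) * A = P * N + Y" "Y + Z = Q" "P * Z = Q" "P * A\<^sub>0 = Q" "P * A = Q + X"
    for P Q X A\<^sub>0 A N Y Z :: int
    using that by algebra
  from this[OF line kernel kernel' agree_0 agree_count_eq[of \<omega>]] show ?thesis
    by (simp add: mult.assoc)
qed

definition D0 :: "'a set" where "D0 = {x. x \<noteq> 0 \<and> f x = 0}"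

abbreviation weight :: "'a \<Rightarrow> nat" where "weight \<equiv> trace_weight D0"

lemma card_D0: "card D0 = p ^ (m - 1) - 1"
proof -
  have "{x. f x = 0} = insert 0 D0" using f_0 by (auto simp: D0_def)
  then have "card {x. f x = 0} = Suc (card D0)" by (simp add: D0_def)
  moreover have "p ^ m = p * p ^ (m - 1)" using m_pos by (simp flip: power_Suc)
  ultimately have "p * Suc (card D0) = p * p ^ (m - 1)" using card_f_eq_0 by simp
  then have "Suc (card D0) = p ^ (m - 1)"
    by (rule mult_left_cancel[THEN iffD1, rotated]) (use p_gt_1 in simp)
  then show ?thesis by simp
qed

lemma weight_eq:
  assumes "\<omega> \<noteq> 0"
  shows "int p ^ 2 * int (weight \<omega>) = (int p - 1) * (int p ^ m - \<epsilon>\<^sub>0 * int p ^ \<kappa> * deviation \<omega>)"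
proof -
  let ?N = "{x. f x = 0 \<and> Tr p m (\<omega> * x) = 0}" and ?W = "{d\<in>D0. Tr p m (\<omega> * d) \<noteq> 0}"
  have "{x. f x = 0} = ?N \<union> ?W" using Tr_0 by (auto simp: D0_def)
  moreover have "card (?N \<union> ?W) = card ?N + card ?W" by (rule card_Un_disjoint) auto
  ultimately have "card {x. f x = 0} = zero_count \<omega> + weight \<omega>"
    unfolding zero_count_def trace_weight_def by simp
  then have "int p * int (zero_count \<omega>) + int p * int (weight \<omega>) = int p ^ m"
    using card_f_eq_0 by (metis add_mult_distrib2 of_nat_add of_nat_mult of_nat_power)
  from arg_cong[OF this, of "\<lambda>z. int p * z"]
  have "int p ^ 2 * int (zero_count \<omega>) + int p ^ 2 * int (weight \<omega>) = int p * int p ^ m"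
    by (simp add: power2_eq_square algebra_simps)
  then show ?thesis using zero_count_eq[OF assms] by (simp add: algebra_simps)
qed

lemma sum_walsh: "(\<Sum>\<omega>\<in>UNIV. walsh p m f \<omega>) = of_nat (p ^ m)"
proof -
  have "zeta p ^ ((f x + p - Tr p m (\<omega> * x)) mod p) = zeta p ^ f x * zeta p ^ Tr p m (- x * \<omega>)"
    for x \<omega>
  proof -
    have "(f x + p - Tr p m (\<omega> * x)) = f x + (p - Tr p m (\<omega> * x))" using Tr_less[of "\<omega> * x"] by simp
    then show ?thesis
      using p_gt_1 by (simp add: Tr_uminus zeta_power_mod power_add mult.commute)
  qed
  then have "(\<Sum>\<omega>\<in>UNIV. walsh p m f \<omega>)
      = (\<Sum>x\<in>UNIV. zeta p ^ f x * (\<Sum>\<omega>\<in>UNIV. zeta p ^ Tr p m (- x * \<omega>)))"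
    by (simp add: walsh_eq_sum_zeta sum_distrib_left) (rule sum.swap)
  also have "\<dots> = (\<Sum>x\<in>UNIV. if (x :: 'a) = 0 then of_nat (p ^ m) else 0)"
  proof (rule sum.cong[OF refl])
    fix x :: 'a
    show "zeta p ^ f x * (\<Sum>\<omega>\<in>UNIV. zeta p ^ Tr p m (- x * \<omega>)) = (if x = 0 then of_nat (p ^ m) else 0)"
      using sum_zeta_power_Tr[of "- x"] by (cases "x = 0") (simp_all add: f_0 Tr_0 card)
  qed
  finally show ?thesis by simp
qed

context
  assumes large_m: "s + 4 \<le> m"
begin

lemma \<kappa>_bounds: "2 \<le> \<kappa>" "\<kappa> + 2 \<le> m"
  using large_m even_m_s by (auto simp: \<kappa>_def elim!: evenE)

text \<open>On \<open>S\<^sub>f\<close> we have \<open>W\<^sub>f = \<epsilon>\<^sub>0 p\<^sup>\<kappa> \<zeta>\<^bsup>f\<^sup>*\<^esup>\<close>, and these values add up to \<open>p\<^sup>m > 0\<close>. If all \<open>f\<^sup>*\<close>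
  vanished and \<open>\<epsilon>\<^sub>0 = -1\<close> the sum would be negative; if none vanished and \<open>\<epsilon>\<^sub>0 = 1\<close>, the value
  distribution of \<open>f\<^sup>*\<close> on \<open>S\<^sub>f\<close> would have \<open>|{f\<^sup>* = 0}| > 0\<close>.\<close>
lemma exists_extremal_dual:
  "\<exists>\<omega>\<in>S. f_dual \<omega> = 0 \<longleftrightarrow> \<epsilon>\<^sub>0 = 1"
proof (rule ccontr)
  assume none: "\<not> ?thesis"
  have "(\<Sum>\<omega>\<in>UNIV. walsh p m f \<omega>) = (\<Sum>\<omega>\<in>S. walsh p m f \<omega>)"
    by (rule sum.mono_neutral_right) (auto simp: walsh_off_S)
  then have sum_S: "of_int (\<epsilon>\<^sub>0 * int p ^ \<kappa>) * (\<Sum>\<omega>\<in>S. zeta p ^ f_dual \<omega>) = of_nat (p ^ m)"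
    by (simp add: sum_walsh walsh_on_S sum_distrib_left)
  consider "\<epsilon>\<^sub>0 = 1" | "\<epsilon>\<^sub>0 = -1" using \<epsilon>\<^sub>0_cases by blast
  then show False
  proof cases
    case 1
    have "p ^ m = p ^ \<kappa> * p ^ (m - \<kappa>)" using \<kappa>_bounds by (simp flip: power_add)
    then have "(\<Sum>\<omega>\<in>S. zeta p ^ f_dual \<omega>) = of_int (int p ^ (m - \<kappa>)) * zeta p ^ 0"
      using sum_S 1 p_gt_1 by simp
    from card_zero_fiber_from_zeta_sum[OF prime _ _ _ this]
    have "int p * int (card {\<omega>\<in>S. f_dual \<omega> = 0}) = int (card S) + (int p - 1) * int p ^ (m - \<kappa>)"
      using f_dual_less p_gt_1 by (simp add: algebra_simps)
    moreover have "{\<omega>\<in>S. f_dual \<omega> = 0} = {}" using none 1 by auto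
    moreover have "0 < (int p - 1) * int p ^ (m - \<kappa>)" using p_gt_1 by simp
    ultimately show False by simp
  next
    case 2
    then have "(\<Sum>\<omega>\<in>S. zeta p ^ f_dual \<omega>) = of_nat (card S)" using none by simp
    then have "complex_of_int (- (int p ^ \<kappa> * int (card S))) = complex_of_int (int (p ^ m))"
      using sum_S 2 by simp
    then have "- (int p ^ \<kappa> * int (card S)) = int (p ^ m)" by (simp only: of_int_eq_iff)
    moreover have "0 \<le> int p ^ \<kappa> * int (card S)" "0 < int (p ^ m)" using p_gt_1 by simp_all
    ultimately show False by linarith
  qed
qed

lemma weight_closed_form:
  assumes "\<omega> \<noteq> 0"
  shows "int (weight \<omega>) = (int p - 1) * (int p ^ (m - 2) - \<epsilon>\<^sub>0 * deviation \<omega> * int p ^ (\<kappa> - 2))"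
proof -
  have "m = 2 + (m - 2)" "\<kappa> = 2 + (\<kappa> - 2)" using \<kappa>_bounds by simp_all
  then have "int p ^ m = int p ^ 2 * int p ^ (m - 2)" "int p ^ \<kappa> = int p ^ 2 * int p ^ (\<kappa> - 2)"
    by (metis power_add)+
  then have "int p ^ 2 * int (weight \<omega>)
      = int p ^ 2 * ((int p - 1) * (int p ^ (m - 2) - \<epsilon>\<^sub>0 * deviation \<omega> * int p ^ (\<kappa> - 2)))"
    using weight_eq[OF assms] by (simp add: algebra_simps)
  then show ?thesis using p_gt_1 by simp
qed

definition deviation_max :: int where
  "deviation_max = (if \<epsilon>\<^sub>0 = 1 then int p - 1 else 1)"

lemma deviation_bounds: "deviation_max - int p \<le> \<epsilon>\<^sub>0 * deviation \<omega> \<and> \<epsilon>\<^sub>0 * deviation \<omega> \<le> deviation_max"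
  using \<epsilon>\<^sub>0_cases p_gt_1 by (auto simp: deviation_max_def deviation_def)

definition min_weight :: int where
  "min_weight = (int p - 1) * (int p ^ (m - 2) - deviation_max * int p ^ (\<kappa> - 2))"

definition max_weight :: int where
  "max_weight = (int p - 1) * (int p ^ (m - 2) - (deviation_max - int p) * int p ^ (\<kappa> - 2))"

lemma weight_bounds:
  assumes "\<omega> \<noteq> 0"
  shows "min_weight \<le> int (weight \<omega>) \<and> int (weight \<omega>) \<le> max_weight"
proof -
  let ?Q = "int p ^ (\<kappa> - 2)" and ?e = "\<epsilon>\<^sub>0 * deviation \<omega>"
  have "?e * ?Q \<le> deviation_max * ?Q" "(deviation_max - int p) * ?Q \<le> ?e * ?Q"
    using deviation_bounds[of \<omega>] by (simp_all add: mult_right_mono)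
  then have "int p ^ (m - 2) - deviation_max * ?Q \<le> int p ^ (m - 2) - ?e * ?Q"
    "int p ^ (m - 2) - ?e * ?Q \<le> int p ^ (m - 2) - (deviation_max - int p) * ?Q"
    by linarith+
  then show ?thesis
    using p_gt_1 unfolding min_weight_def max_weight_def weight_closed_form[OF assms]
    by (simp add: mult_left_mono)
qed

lemma min_weight_attained: "\<exists>\<omega>. \<omega> \<noteq> 0 \<and> int (weight \<omega>) = min_weight"
proof -
  obtain \<omega> where "\<omega> \<in> S" "f_dual \<omega> = 0 \<longleftrightarrow> \<epsilon>\<^sub>0 = 1" using exists_extremal_dual by auto
  moreover from this have "\<omega> \<noteq> 0" using zero_notin_S by auto
  ultimately show ?thesis using \<epsilon>\<^sub>0_cases
    by (auto simp: weight_closed_form min_weight_def deviation_max_def deviation_def)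
qed

text \<open>With \<open>P = p\<^bsup>m-2\<^esup>\<close>, \<open>Q = p\<^bsup>\<kappa>-2\<^esup>\<close> and \<open>M = deviation_max \<le> p - 1\<close> the claim reads
  \<open>(M + p\<^sup>2 - p) Q < P\<close>, which holds as \<open>p\<^sup>2 Q \<le> P\<close>.\<close>
lemma weight_ratio: "(int p - 1) * max_weight < int p * min_weight"
proof -
  have "m - 2 = 2 + (\<kappa> - 2) + (m - \<kappa> - 2)" using \<kappa>_bounds by simp
  then have "int p ^ (m - 2) = int p ^ 2 * int p ^ (\<kappa> - 2) * int p ^ (m - \<kappa> - 2)"
    by (metis power_add)
  moreover have "int p ^ 2 * int p ^ (\<kappa> - 2) * 1 \<le> int p ^ 2 * int p ^ (\<kappa> - 2) * int p ^ (m - \<kappa> - 2)"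
    using p_gt_1 by (intro mult_left_mono) simp_all
  ultimately have P: "int p ^ 2 * int p ^ (\<kappa> - 2) \<le> int p ^ (m - 2)" by simp
  have Q: "0 < int p ^ (\<kappa> - 2)" using p_gt_1 by simp
  have "(deviation_max + int p ^ 2 - int p) * int p ^ (\<kappa> - 2) \<le> (int p ^ 2 - 1) * int p ^ (\<kappa> - 2)"
    using p_gt_1 Q by (intro mult_right_mono) (simp_all add: deviation_max_def)
  also have "\<dots> < int p ^ 2 * int p ^ (\<kappa> - 2)" using Q by (simp add: algebra_simps)
  also have "\<dots> \<le> int p ^ (m - 2)" by (rule P)
  finally have "0 < int p ^ (m - 2) - (deviation_max + int p ^ 2 - int p) * int p ^ (\<kappa> - 2)"
    by simp
  then have "0 < (int p - 1) * (int p ^ (m - 2) - (deviation_max + int p ^ 2 - int p) * int p ^ (\<kappa> - 2))"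
    using p_gt_1 by simp
  also have "\<dots> = int p * min_weight - (int p - 1) * max_weight"
    unfolding min_weight_def max_weight_def by (simp add: algebra_simps power2_eq_square)
  finally show ?thesis by simp
qed

lemma min_weight_real:
  "real_of_int min_weight
    = (real p - 1) * (real p ^ (m - 2) - (if \<epsilon>\<^sub>0 = 1 then real p - 1 else 1) * sqrt (real p) ^ (m + s - 4))"
proof -
  have "m + s = 2 * \<kappa>" using even_m_s by (simp add: \<kappa>_def)
  then have "m + s - 4 = 2 * (\<kappa> - 2)" using \<kappa>_bounds by simp
  then have "sqrt (real p) ^ (m + s - 4) = real p ^ (\<kappa> - 2)" by (simp add: power_mult)
  then show ?thesis by (simp add: min_weight_def deviation_max_def)
qed

lemma min_weight_pos: "0 < min_weight"
proof -
  obtain \<omega> where "\<omega> \<noteq> 0" "int (weight \<omega>) = min_weight" using min_weight_attained by blast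
  then have "min_weight \<le> max_weight" using weight_bounds by fastforce
  then have "(int p - 1) * min_weight \<le> (int p - 1) * max_weight"
    using p_gt_1 by (intro mult_left_mono) auto
  with weight_ratio have "(int p - 1) * min_weight < int p * min_weight" by linarith
  then show ?thesis by (simp add: left_diff_distrib)
qed

end

end

theorem proposition4:
  fixes f :: "'a::{field,finite} \<Rightarrow> nat" and p m s :: nat and \<epsilon> :: int
  assumes "prime p" and "odd p"
    and "CHAR('a) = p" and "CARD('a) = p ^ m"
    and "m \<ge> 1" and "1 \<le> s" and "s + 4 \<le> m" and "even (m + s)"
    and "WRPB p m s f"
    and "has_sign p m s f \<epsilon>"
  defines "D0 \<equiv> {x::'a. x \<noteq> 0 \<and> f x = 0}"
    and "\<epsilon>0 \<equiv> \<epsilon> * eta0_minus1 p ^ ((m + s) div 2)"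
  shows "minimal_code p D0 (code_D p m D0) \<and>
    (if \<epsilon>0 = 1 then
       (\<exists>d. code_params p D0 (code_D p m D0) (p ^ (m - 1) - 1) m d \<and>
            real d = (real p - 1) * (real p ^ (m - 2) - (real p - 1) * sqrt (real p) ^ (m + s - 4)))
     else
       (\<exists>d. code_params p D0 (code_D p m D0) (p ^ (m - 1) - 1) m d \<and>
            real d = (real p - 1) * (real p ^ (m - 2) - sqrt (real p) ^ (m + s - 4))))"
proof -
  interpret W: wrpb_function p m "TYPE('a)" f s \<epsilon>
    by unfold_locales (use assms in auto)
  have D0: "D0 = W.D0" and \<epsilon>0: "\<epsilon>0 = W.\<epsilon>\<^sub>0"
    by (simp_all add: D0_def W.D0_def \<epsilon>0_def W.\<epsilon>\<^sub>0_def W.\<kappa>_def)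
  have large: "s + 4 \<le> m" by fact
  note bounds = W.weight_bounds[OF large]
  have weight_pos: "0 < W.weight \<omega>" if "\<omega> \<noteq> 0" for \<omega>
    using bounds[OF that] W.min_weight_pos[OF large] by linarith
  obtain \<omega>\<^sub>0 where "\<omega>\<^sub>0 \<noteq> 0" "int (W.weight \<omega>\<^sub>0) = W.min_weight"
    using W.min_weight_attained[OF large] by blast
  moreover have "nat W.min_weight \<le> W.weight \<omega>" if "\<omega> \<noteq> 0" for \<omega>
    using bounds[OF that] by (simp add: nat_le_iff)
  ultimately have "min_distance W.D0 (code_D p m W.D0) = nat W.min_weight"
    using W.min_distance_code_D[OF weight_pos] by simp
  then have "code_params p D0 (code_D p m D0) (p ^ (m - 1) - 1) m (nat W.min_weight)"
    by (simp add: code_params_def D0 W.card_D0 W.card_code_D[OF weight_pos])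
  moreover have "minimal_code p D0 (code_D p m D0)"
    unfolding D0 using bounds W.weight_ratio[OF large] by (rule W.minimal_code_if_weight_ratio)
  moreover have "real (nat W.min_weight) = real_of_int W.min_weight"
    using W.min_weight_pos[OF large] by simp
  ultimately show ?thesis using W.min_weight_real[OF large] by (auto simp: \<epsilon>0)
qed

end
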